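(* The single-mode creation operator $\hat a^\dagger$ has approximate operator coherent rank $2$, and for any integer $n\ge0$ and coefficients $b_0,\dots,b_n\in\mathbb C$ the operator $\sum_{l=0}^n b_l(\hat a^\dagger)^l$ has approximate operator coherent rank at most $n+1$.
   Context: Single mode with Fock basis $\{|n\rangle\}$, creation operator $\hat a^\dagger=\sum_{n\ge0}\sqrt{n+1}|n+1\rangle\langle n|$. Coherent state $|\alpha\rangle=e^{-|\alpha|^2/2}\sum_n\frac{\alpha^n}{\sqrt{n!}}|n\rangle$. A state has coherent rank $k$ if it is a superposition of $k$ coherent states; its approximate coherent rank is the smallest $k$ such that for every $\delta>0$ there is a coherent rank $k$ state with fidelity greater than $1-\delta$ to it (after normalization). An operator $\hat A$ has approximate operator coherent rank $\ell$ iff $\hat A|\alpha\rangle$ has approximate coherent rank at most $\ell$ for every coherent state $|\alpha\rangle$ (and this bound is attained for at least one coherent state). *)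

theory Defs
  imports Complex_Main
begin

text \<open>Single-mode states are represented by their Fock-basis coefficients
  \<open>\<psi> :: nat \<Rightarrow> complex\<close>, i.e. \<open>\<psi> n = \<langle>n|\<psi>\<rangle>\<close>.\<close>

type_synonym state = "nat \<Rightarrow> complex"

definition coh :: "complex \<Rightarrow> state" where
  "coh \<alpha> n = complex_of_real (exp (- ((cmod \<alpha>) ^ 2) / 2)) * \<alpha> ^ n / complex_of_real (sqrt (fact n))"

definition adag :: "state \<Rightarrow> state" where
  "adag \<psi> n = (case n of 0 \<Rightarrow> 0 | Suc m \<Rightarrow> complex_of_real (sqrt (real (Suc m))) * \<psi> m)"

definition poly_adag :: "(nat \<Rightarrow> complex) \<Rightarrow> nat \<Rightarrow> state \<Rightarrow> state" where
  "poly_adag b N \<psi> n = (\<Sum>l\<le>N. b l * (adag ^^ l) \<psi> n)"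

definition inner_st :: "state \<Rightarrow> state \<Rightarrow> complex" where
  "inner_st \<phi> \<psi> = (\<Sum>n. cnj (\<phi> n) * \<psi> n)"

definition normsq_st :: "state \<Rightarrow> real" where
  "normsq_st \<psi> = (\<Sum>n. (cmod (\<psi> n))^2)"

definition fidelity :: "state \<Rightarrow> state \<Rightarrow> real" where
  "fidelity \<phi> \<psi> = (cmod (inner_st \<phi> \<psi>))^2 / (normsq_st \<phi> * normsq_st \<psi>)"

definition coh_rank_le :: "state \<Rightarrow> nat \<Rightarrow> bool" where
  "coh_rank_le \<phi> k \<longleftrightarrow> (\<exists>c \<alpha>. \<phi> = (\<lambda>n. \<Sum>j<k. c j * coh (\<alpha> j) n))"

text \<open>Approximate coherent rank at most \<open>k\<close>: for every \<open>\<delta> > 0\<close> there is a coherent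
  rank \<open>k\<close> state with fidelity greater than \<open>1 - \<delta>\<close>.  (Convention: the zero vector,
  the empty superposition, has rank 0.)\<close>
definition approx_coh_rank_le :: "state \<Rightarrow> nat \<Rightarrow> bool" where
  "approx_coh_rank_le \<psi> k \<longleftrightarrow>
     \<psi> = (\<lambda>_. 0) \<or> (\<forall>\<delta>>0. \<exists>\<phi>. coh_rank_le \<phi> k \<and> fidelity \<phi> \<psi> > 1 - \<delta>)"

definition approx_coh_rank :: "state \<Rightarrow> nat" where
  "approx_coh_rank \<psi> = (LEAST k. approx_coh_rank_le \<psi> k)"

definition op_approx_coh_rank_le :: "(state \<Rightarrow> state) \<Rightarrow> nat \<Rightarrow> bool" where
  "op_approx_coh_rank_le A l \<longleftrightarrow> (\<forall>\<alpha>. approx_coh_rank_le (A (coh \<alpha>)) l)"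

definition op_approx_coh_rank_eq :: "(state \<Rightarrow> state) \<Rightarrow> nat \<Rightarrow> bool" where
  "op_approx_coh_rank_eq A l \<longleftrightarrow>
     op_approx_coh_rank_le A l \<and> (\<exists>\<alpha>. approx_coh_rank (A (coh \<alpha>)) = l)"

end

theory Submission
  imports Defs "HOL-Analysis.Analysis"
begin

text \<open>
  Up to the factor \<open>e^{-|\<alpha>|^2/2} / \<surd>n!\<close>, the Fock coefficients of \<open>|\<alpha>\<rangle>\<close> are
  \<open>\<alpha>^n\<close>, and \<open>a\<^sup>\<dagger>\<close> acts on them as \<open>d/d\<alpha>\<close>. So \<open>\<Sum>\<^sub>l b\<^sub>l (a\<^sup>\<dagger>)^l |\<alpha>\<rangle>\<close> has
  coefficients \<open>\<Sum>\<^sub>l b\<^sub>l (d/d\<alpha>)^l \<alpha>^n\<close>. Replacing each derivative by the forward-difference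
  quotient \<open>\<Delta>\<^sub>h^l / h^l\<close> gives a combination of the \<open>N + 1\<close> coherent states \<open>|\<alpha> + j h\<rangle>\<close>,
  \<open>j = 0..N\<close>. As \<open>h \<rightarrow> 0\<close> its coefficients converge, dominated by the square-summable
  \<open>K R^n / \<surd>n!\<close>, so by Tannery's theorem the fidelity tends to 1. For the lower bound,
  \<open>a\<^sup>\<dagger>|0\<rangle> = |1\<rangle>\<close>, and \<open>|\<langle>1|\<beta>\<rangle>|^2 = |\<beta>|^2 e^{-|\<beta>|^2} \<le> 1/e < 1/2\<close> for every coherent
  state \<open>|\<beta>\<rangle>\<close>.
\<close>

section \<open>Finite differences of powers\<close>

text \<open>The \<open>l\<close>-th forward difference of \<open>x^k\<close> at \<open>0\<close>, i.e. \<open>l!\<close> times the Stirling number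
  \<open>S(k, l)\<close>.\<close>
definition fwd_diff_pow :: "nat \<Rightarrow> nat \<Rightarrow> 'a::comm_ring_1" where
  "fwd_diff_pow l k = (\<Sum>j\<le>l. (-1)^(l-j) * of_nat (l choose j) * of_nat j ^ k)"

lemma fwd_diff_pow_Suc:
  "fwd_diff_pow (Suc l) k = (\<Sum>i<k. of_nat (k choose i) * (fwd_diff_pow l i :: 'a::comm_ring_1))"
proof -
  have pascal: "fwd_diff_pow (Suc l) k
      = (\<Sum>j\<le>l. (-1)^(l-j) * of_nat (l choose j) * (of_nat j + 1 :: 'a) ^ k) - fwd_diff_pow l k"
  proof -
    have "fwd_diff_pow (Suc l) k = (-1)^(Suc l) * 0^k
        + (\<Sum>j\<le>l. (-1)^(l-j) * of_nat (Suc l choose Suc j) * (of_nat j + 1 :: 'a) ^ k)"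
      unfolding fwd_diff_pow_def by (subst sum.atMost_Suc_shift) (simp add: add.commute)
    also have "\<dots> = (-1)^(Suc l) * 0^k
        + (\<Sum>j\<le>l. (-1)^(l-j) * of_nat (l choose Suc j) * (of_nat j + 1 :: 'a) ^ k)
        + (\<Sum>j\<le>l. (-1)^(l-j) * of_nat (l choose j) * (of_nat j + 1 :: 'a) ^ k)"
      by (simp add: algebra_simps sum.distrib)
    also have "(-1)^(Suc l) * 0^k
        + (\<Sum>j\<le>l. (-1)^(l-j) * of_nat (l choose Suc j) * (of_nat j + 1 :: 'a) ^ k)
        = (\<Sum>j\<le>Suc l. (-1)^(Suc l-j) * of_nat (l choose j) * (of_nat j :: 'a) ^ k)"
      by (subst sum.atMost_Suc_shift) (simp add: add.commute)
    also have "\<dots> = (\<Sum>j\<le>l. (-1)^(Suc l-j) * of_nat (l choose j) * (of_nat j :: 'a) ^ k)"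
      by (simp add: binomial_eq_0)
    also have "\<dots> = - fwd_diff_pow l k"
      unfolding fwd_diff_pow_def
      by (auto simp add: sum_negf[symmetric] Suc_diff_le intro!: sum.cong)
    finally show ?thesis by simp
  qed
  have "(\<Sum>j\<le>l. (-1)^(l-j) * of_nat (l choose j) * (of_nat j + 1 :: 'a) ^ k)
      = (\<Sum>j\<le>l. (-1)^(l-j) * of_nat (l choose j) * (\<Sum>i\<le>k. of_nat (k choose i) * of_nat j ^ i))"
    by (simp add: binomial_ring[of "of_nat _" 1] mult.commute)
  also have "\<dots> = (\<Sum>i\<le>k. of_nat (k choose i) * fwd_diff_pow l i)"
    unfolding fwd_diff_pow_def
    by (simp add: sum_distrib_left sum_distrib_right algebra_simps sum.swap[of _ "{..k}"])
  finally show ?thesis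
    unfolding pascal by (simp add: lessThan_Suc_atMost[symmetric] sum.lessThan_Suc)
qed

lemma fwd_diff_pow_eq_0: "k < l \<Longrightarrow> fwd_diff_pow l k = 0"
proof (induction l arbitrary: k)
  case (Suc l)
  then show ?case unfolding fwd_diff_pow_Suc by (intro sum.neutral) auto
qed simp

lemma fwd_diff_pow_same: "fwd_diff_pow l l = fact l"
proof (induction l)
  case (Suc l)
  have "fwd_diff_pow (Suc l) (Suc l) = of_nat (Suc l) * (fwd_diff_pow l l :: 'a)"
    unfolding fwd_diff_pow_Suc by (simp add: sum.lessThan_Suc fwd_diff_pow_eq_0)
  then show ?case using Suc by simp
qed (simp add: fwd_diff_pow_def)

lemma norm_fwd_diff_pow_le:
  "norm (fwd_diff_pow l k :: 'a::real_normed_field) \<le> 2^l * real l ^ k"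
proof -
  have "norm (fwd_diff_pow l k :: 'a) \<le> (\<Sum>j\<le>l. real (l choose j) * real j ^ k)"
    unfolding fwd_diff_pow_def
    by (rule order_trans[OF norm_sum]) (simp add: norm_mult norm_power)
  also have "\<dots> \<le> (\<Sum>j\<le>l. real (l choose j) * real l ^ k)"
    by (intro sum_mono mult_left_mono power_mono) auto
  also have "\<dots> = 2^l * real l ^ k"
    by (simp add: sum_distrib_right[symmetric] choose_row_sum flip: of_nat_sum)
  finally show ?thesis .
qed

lemma fwd_diff_power_expansion:
  fixes \<alpha> h :: "'a::field"
  assumes "h \<noteq> 0"
  shows "(\<Sum>j\<le>l. (-1)^(l-j) * of_nat (l choose j) * (\<alpha> + of_nat j * h)^n) / h^l
       = (\<Sum>k\<in>{l..n}. of_nat (n choose k) * \<alpha>^(n-k) * h^(k-l) * fwd_diff_pow l k)"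
proof -
  have "(\<Sum>j\<le>l. (-1)^(l-j) * of_nat (l choose j) * (\<alpha> + of_nat j * h)^n)
      = (\<Sum>j\<le>l. (-1)^(l-j) * of_nat (l choose j)
           * (\<Sum>k\<le>n. of_nat (n choose k) * (of_nat j * h)^k * \<alpha>^(n-k)))"
    by (simp add: binomial_ring[of "of_nat _ * h" \<alpha>, symmetric] add.commute)
  also have "\<dots> = (\<Sum>k\<le>n. of_nat (n choose k) * \<alpha>^(n-k) * h^k * fwd_diff_pow l k)"
    unfolding fwd_diff_pow_def
    by (simp add: sum_distrib_left sum_distrib_right power_mult_distrib algebra_simps
        sum.swap[of _ "{..n}"])
  also have "\<dots> = (\<Sum>k\<in>{l..n}. of_nat (n choose k) * \<alpha>^(n-k) * h^k * fwd_diff_pow l k)"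
    by (rule sum.mono_neutral_right) (auto simp: fwd_diff_pow_eq_0)
  finally show ?thesis
    using assms by (simp add: sum_divide_distrib power_diff)
qed

text \<open>By \<open>fwd_diff_power_expansion\<close>, for \<open>h \<noteq> 0\<close> this is \<open>\<Sum>\<^sub>l b\<^sub>l (\<Delta>\<^sub>h^l z^n)(\<alpha>) / h^l\<close>; being
  a polynomial in \<open>h\<close>, it is continuous at \<open>h = 0\<close>, where it equals \<open>\<Sum>\<^sub>l b\<^sub>l (d/d\<alpha>)^l \<alpha>^n\<close>.\<close>
definition fwd_diff_quot_pow :: "(nat \<Rightarrow> complex) \<Rightarrow> nat \<Rightarrow> complex \<Rightarrow> complex \<Rightarrow> nat \<Rightarrow> complex"
  where "fwd_diff_quot_pow b N \<alpha> h n =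
    (\<Sum>l\<le>N. b l * (\<Sum>k\<in>{l..n}. of_nat (n choose k) * \<alpha>^(n-k) * h^(k-l) * fwd_diff_pow l k))"

lemma fwd_diff_quot_pow_0:
  "fwd_diff_quot_pow b N \<alpha> 0 n =
    (\<Sum>l\<le>N. b l * (if l \<le> n then of_nat (n choose l) * fact l * \<alpha>^(n-l) else 0))"
proof -
  have "(\<Sum>k\<in>{l..n}. of_nat (n choose k) * \<alpha>^(n-k) * 0^(k-l) * fwd_diff_pow l k)
      = (if l \<le> n then of_nat (n choose l) * fact l * \<alpha>^(n-l) else 0)" for l
  proof (cases "l \<le> n")
    case True
    then have "(\<Sum>k\<in>{l..n}. of_nat (n choose k) * \<alpha>^(n-k) * 0^(k-l) * fwd_diff_pow l k)
        = (\<Sum>k\<in>{l}. of_nat (n choose k) * \<alpha>^(n-k) * 0^(k-l) * (fwd_diff_pow l k :: complex))"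
      by (intro sum.mono_neutral_right) auto
    then show ?thesis using True by (simp add: fwd_diff_pow_same)
  qed simp
  then show ?thesis unfolding fwd_diff_quot_pow_def by simp
qed

lemma fwd_diff_quot_pow_eq_sum_powers:
  assumes "h \<noteq> 0"
  shows "fwd_diff_quot_pow b N \<alpha> h n =
    (\<Sum>j\<le>N. (\<Sum>l\<le>N. b l * (-1)^(l-j) * of_nat (l choose j) / h^l) * (\<alpha> + of_nat j * h)^n)"
proof -
  have "fwd_diff_quot_pow b N \<alpha> h n =
      (\<Sum>l\<le>N. \<Sum>j\<le>N. b l * (-1)^(l-j) * of_nat (l choose j) / h^l * (\<alpha> + of_nat j * h)^n)"
  proof (unfold fwd_diff_quot_pow_def, intro sum.cong refl)
    fix l assume "l \<in> {..N}"
    have "(\<Sum>k\<in>{l..n}. of_nat (n choose k) * \<alpha>^(n-k) * h^(k-l) * fwd_diff_pow l k)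
        = (\<Sum>j\<le>l. (-1)^(l-j) * of_nat (l choose j) * (\<alpha> + of_nat j * h)^n) / h^l"
      by (rule fwd_diff_power_expansion[OF assms, symmetric])
    also have "\<dots> = (\<Sum>j\<le>N. (-1)^(l-j) * of_nat (l choose j) * (\<alpha> + of_nat j * h)^n) / h^l"
      using \<open>l \<in> {..N}\<close> by (intro arg_cong2[where f = "(/)"] sum.mono_neutral_left) auto
    finally show "b l * (\<Sum>k\<in>{l..n}. of_nat (n choose k) * \<alpha>^(n-k) * h^(k-l) * fwd_diff_pow l k)
      = (\<Sum>j\<le>N. b l * (-1)^(l-j) * of_nat (l choose j) / h^l * (\<alpha> + of_nat j * h)^n)"
      by (simp add: sum_distrib_left sum_divide_distrib mult_ac)
  qed
  also have "\<dots> =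
      (\<Sum>j\<le>N. \<Sum>l\<le>N. b l * (-1)^(l-j) * of_nat (l choose j) / h^l * (\<alpha> + of_nat j * h)^n)"
    by (rule sum.swap)
  finally show ?thesis
    by (simp only: sum_distrib_right)
qed

lemma isCont_fwd_diff_quot_pow: "isCont (\<lambda>h. fwd_diff_quot_pow b N \<alpha> h n) h\<^sub>0"
  unfolding fwd_diff_quot_pow_def by (intro continuous_intros)

lemma norm_fwd_diff_quot_pow_le:
  assumes "norm h \<le> 1"
  shows "norm (fwd_diff_quot_pow b N \<alpha> h n) \<le> (\<Sum>l\<le>N. norm (b l)) * 2^N * (norm \<alpha> + real N)^n"
proof -
  have inner: "norm (\<Sum>k\<in>{l..n}. of_nat (n choose k) * \<alpha>^(n-k) * h^(k-l) * fwd_diff_pow l k)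
      \<le> 2^N * (norm \<alpha> + real N)^n" if "l \<le> N" for l
  proof -
    have fd: "norm (fwd_diff_pow l k :: complex) \<le> 2^N * real N ^ k" for k
    proof -
      have "2^l * real l ^ k \<le> 2^N * real N ^ k"
        using that by (intro mult_mono power_increasing power_mono) auto
      then show ?thesis by (rule order_trans[OF norm_fwd_diff_pow_le])
    qed
    have "norm (\<Sum>k\<in>{l..n}. of_nat (n choose k) * \<alpha>^(n-k) * h^(k-l) * fwd_diff_pow l k)
        \<le> (\<Sum>k\<in>{l..n}. real (n choose k) * norm \<alpha>^(n-k) * 1 * (2^N * real N ^ k))"
      apply (rule order_trans[OF norm_sum], rule sum_mono)
      apply (simp only: norm_mult norm_power norm_of_nat)
      apply (intro mult_mono fd)
      using assms by (auto intro!: power_le_one)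
    also have "\<dots> \<le> (\<Sum>k\<le>n. real (n choose k) * norm \<alpha>^(n-k) * 1 * (2^N * real N ^ k))"
      by (intro sum_mono2) auto
    also have "\<dots> = 2^N * (norm \<alpha> + real N)^n"
      by (simp add: binomial_ring[of "real N" "norm \<alpha>"] add.commute sum_distrib_left algebra_simps)
    finally show ?thesis .
  qed
  have "norm (fwd_diff_quot_pow b N \<alpha> h n) \<le> (\<Sum>l\<le>N. norm (b l) * (2^N * (norm \<alpha> + real N)^n))"
    unfolding fwd_diff_quot_pow_def
    by (rule order_trans[OF norm_sum], rule sum_mono) (simp add: norm_mult inner mult_left_mono)
  also have "\<dots> = (\<Sum>l\<le>N. norm (b l)) * 2^N * (norm \<alpha> + real N)^n"
    by (simp only: sum_distrib_right mult.assoc)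
  finally show ?thesis .
qed

section \<open>Coherent states and the creation operator\<close>

text \<open>Not a simp rule: it would loop on \<open>coh \<alpha> 0\<close>.\<close>
lemma coh_eq: "coh \<alpha> n = coh \<alpha> 0 * \<alpha>^n / of_real (sqrt (fact n))"
  by (simp add: coh_def)

lemma coh_0_nonzero: "coh \<alpha> 0 \<noteq> 0"
  by (simp add: coh_def)

lemma adag_div_sqrt_fact:
  "adag (\<lambda>n. u n / of_real (sqrt (fact n))) n =
     (case n of 0 \<Rightarrow> 0 | Suc m \<Rightarrow> of_nat n * u m) / of_real (sqrt (fact n))"
proof (cases n)
  case (Suc m)
  have "complex_of_real (sqrt (fact n)) = of_real (sqrt (real n)) * of_real (sqrt (fact m))"
    using Suc by (simp add: real_sqrt_mult del: of_nat_Suc)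
  moreover have "of_real (sqrt (real n)) * of_real (sqrt (real n)) = (of_nat n :: complex)"
    by (simp flip: of_real_mult)
  moreover have "sqrt (real n) \<noteq> 0"
    using Suc by simp
  ultimately have "of_real (sqrt (real n)) * u m / complex_of_real (sqrt (fact m))
      = of_nat n * u m / complex_of_real (sqrt (fact n))"
    by (simp add: field_simps)
  then show ?thesis
    by (simp add: adag_def Suc del: of_nat_Suc)
qed (simp add: adag_def)

lemma adag_pow_coh:
  "(adag ^^ l) (coh \<alpha>) = (\<lambda>n. coh \<alpha> 0 *
     (if l \<le> n then of_nat (n choose l) * fact l * \<alpha>^(n-l) else 0) / of_real (sqrt (fact n)))"
proof (induction l)
  case 0
  show ?case
  proof
    fix n
    show "(adag ^^ 0) (coh \<alpha>) n = coh \<alpha> 0 *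
        (if 0 \<le> n then of_nat (n choose 0) * fact 0 * \<alpha>^(n-0) else 0) / of_real (sqrt (fact n))"
      using coh_eq[of \<alpha> n] by simp
  qed
next
  case (Suc l)
  define u where "u n = coh \<alpha> 0 * (if l \<le> n then of_nat (n choose l) * fact l * \<alpha>^(n-l) else 0)" for n
  have step: "(case n of 0 \<Rightarrow> 0 | Suc m \<Rightarrow> of_nat n * u m) =
      coh \<alpha> 0 * (if Suc l \<le> n then of_nat (n choose Suc l) * fact (Suc l) * \<alpha>^(n - Suc l) else 0)"
    for n
  proof (cases n)
    case (Suc m)
    have "of_nat (Suc m) * of_nat (m choose l) = (of_nat (Suc m choose Suc l) * of_nat (Suc l) :: complex)"
      by (metis Suc_times_binomial of_nat_mult mult.commute)
    then show ?thesis
      by (simp add: Suc u_def mult_ac del: of_nat_Suc binomial_Suc_Suc)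
  qed simp
  have "(adag ^^ Suc l) (coh \<alpha>) = adag (\<lambda>n. u n / of_real (sqrt (fact n)))"
    using Suc.IH by (simp add: u_def)
  also have "\<dots> = (\<lambda>n. (case n of 0 \<Rightarrow> 0 | Suc m \<Rightarrow> of_nat n * u m) / of_real (sqrt (fact n)))"
    by (rule ext, rule adag_div_sqrt_fact)
  finally show ?case
    by (simp only: step)
qed

lemma poly_adag_coh:
  "poly_adag b N (coh \<alpha>) n = coh \<alpha> 0 * fwd_diff_quot_pow b N \<alpha> 0 n / of_real (sqrt (fact n))"
  unfolding poly_adag_def adag_pow_coh fwd_diff_quot_pow_0
  by (simp add: sum_distrib_left sum_divide_distrib mult.left_commute)

lemma coh_rank_le_sum_powers:
  "coh_rank_le (\<lambda>n. (\<Sum>j<k. c j * \<beta> j ^ n) / of_real (sqrt (fact n))) k"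
proof -
  have "(\<Sum>j<k. c j * \<beta> j ^ n) / of_real (sqrt (fact n)) = (\<Sum>j<k. c j / coh (\<beta> j) 0 * coh (\<beta> j) n)"
    for n
  proof -
    have "coh (\<beta> j) n = coh (\<beta> j) 0 * \<beta> j ^ n / of_real (sqrt (fact n))" for j
      by (rule coh_eq)
    then show ?thesis
      by (simp add: sum_divide_distrib coh_0_nonzero)
  qed
  then show ?thesis
    unfolding coh_rank_le_def by (intro exI[of _ "\<lambda>j. c j / coh (\<beta> j) 0"] exI[of _ \<beta>]) auto
qed

section \<open>The upper bound\<close>

lemma tendsto_suminf_dominated:
  fixes f :: "'b \<Rightarrow> nat \<Rightarrow> 'a::{real_normed_algebra, banach}"
  assumes "F \<noteq> bot"
    and "\<And>n. ((\<lambda>h. f h n) \<longlongrightarrow> g n) F"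
    and bound: "eventually (\<lambda>h. \<forall>n. norm (f h n) \<le> M n) F"
    and "summable M"
  shows "((\<lambda>h. \<Sum>n. f h n) \<longlongrightarrow> (\<Sum>n. g n)) F" and "summable (\<lambda>n. norm (g n))"
proof -
  have "eventually (\<lambda>(n, h). norm (f h n) \<le> M n) (at_top \<times>\<^sub>F F)"
    using eventually_prodI[OF always_eventually[of "\<lambda>_. True"] bound, where F = at_top]
    by (rule eventually_mono) auto
  from tannerys_theorem[of "\<lambda>n h. f h n", OF assms(2) this assms(4,1)]
  show "((\<lambda>h. \<Sum>n. f h n) \<longlongrightarrow> (\<Sum>n. g n)) F" and "summable (\<lambda>n. norm (g n))"
    by auto
qed

lemma fidelity_tendsto_1:
  fixes G :: "'b \<Rightarrow> state"
  assumes "F \<noteq> bot"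
    and lim: "\<And>n. ((\<lambda>h. G h n) \<longlongrightarrow> \<psi> n) F"
    and bound: "eventually (\<lambda>h. \<forall>n. cmod (G h n) \<le> M n) F"
    and summable: "summable (\<lambda>n. (M n)^2)"
    and "\<psi> \<noteq> (\<lambda>_. 0)"
  shows "((\<lambda>h. fidelity (G h) \<psi>) \<longlongrightarrow> 1) F"
proof -
  have \<psi>_le: "cmod (\<psi> n) \<le> M n" for n
    using tendsto_upperbound[OF tendsto_norm[OF lim] eventually_mono[OF bound] \<open>F \<noteq> bot\<close>] by blast
  have M_nonneg: "0 \<le> M n" for n
    using \<psi>_le[of n] norm_ge_zero order_trans by blast
  have bound2: "eventually (\<lambda>h. \<forall>n. norm (f (G h n) (\<psi> n)) \<le> (M n)^2) F"
    if "\<And>x y n. cmod x \<le> M n \<Longrightarrow> cmod y \<le> M n \<Longrightarrow> norm (f x y) \<le> (M n)^2"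
    for f :: "complex \<Rightarrow> complex \<Rightarrow> 'c::real_normed_vector"
    using bound by (rule eventually_mono) (auto intro: that \<psi>_le)
  have inner: "((\<lambda>h. inner_st (G h) \<psi>) \<longlongrightarrow> (\<Sum>n. cnj (\<psi> n) * \<psi> n)) F"
    unfolding inner_st_def
    by (rule tendsto_suminf_dominated(1)[OF \<open>F \<noteq> bot\<close> _ bound2[of "\<lambda>x y. cnj x * y"] summable])
       (auto intro!: tendsto_intros lim mult_mono simp: norm_mult power2_eq_square M_nonneg)
  have "summable (\<lambda>n. norm ((cmod (\<psi> n))^2))"
    and normsq: "((\<lambda>h. normsq_st (G h)) \<longlongrightarrow> normsq_st \<psi>) F"
    unfolding normsq_st_def
    by (rule tendsto_suminf_dominated[OF \<open>F \<noteq> bot\<close> _ bound2[of "\<lambda>x y. (cmod x)^2"] summable];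
        auto intro!: tendsto_intros lim power_mono)+
  then have summable_\<psi>: "summable (\<lambda>n. (cmod (\<psi> n))^2)"
    by simp
  have inner_self: "(\<Sum>n. cnj (\<psi> n) * \<psi> n) = of_real (normsq_st \<psi>)"
    unfolding normsq_st_def suminf_of_real[OF summable_\<psi>]
    by (simp add: complex_norm_square mult.commute del: of_real_power)
  obtain i where "\<psi> i \<noteq> 0"
    using \<open>\<psi> \<noteq> (\<lambda>_. 0)\<close> by auto
  then have "normsq_st \<psi> > 0"
    unfolding normsq_st_def by (intro suminf_pos2[OF summable_\<psi>, of i]) auto
  then have "((\<lambda>h. fidelity (G h) \<psi>) \<longlongrightarrow>
      (cmod (of_real (normsq_st \<psi>)))^2 / (normsq_st \<psi> * normsq_st \<psi>)) F"
    unfolding fidelity_def using inner normsq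
    by (intro tendsto_intros) (auto simp: inner_self)
  also have "(cmod (of_real (normsq_st \<psi>)))^2 / (normsq_st \<psi> * normsq_st \<psi>) = 1"
    using \<open>normsq_st \<psi> > 0\<close> by (simp add: power2_eq_square)
  finally show ?thesis .
qed

lemma approx_coh_rank_le_if_tendsto:
  fixes G :: "'b \<Rightarrow> state"
  assumes "F \<noteq> bot"
    and rank: "eventually (\<lambda>h. coh_rank_le (G h) k) F"
    and "\<And>n. ((\<lambda>h. G h n) \<longlongrightarrow> \<psi> n) F"
    and "eventually (\<lambda>h. \<forall>n. cmod (G h n) \<le> M n) F"
    and "summable (\<lambda>n. (M n)^2)"
  shows "approx_coh_rank_le \<psi> k"
proof (cases "\<psi> = (\<lambda>_. 0)")
  case False
  then have lim: "((\<lambda>h. fidelity (G h) \<psi>) \<longlongrightarrow> 1) F"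
    using assms by (intro fidelity_tendsto_1) auto
  show ?thesis
    unfolding approx_coh_rank_le_def
  proof (intro disjI2 allI impI)
    fix \<delta> :: real
    assume "\<delta> > 0"
    then have "eventually (\<lambda>h. coh_rank_le (G h) k \<and> 1 - \<delta> < fidelity (G h) \<psi>) F"
      using rank order_tendstoD(1)[OF lim, of "1 - \<delta>"] by (auto intro: eventually_conj)
    then show "\<exists>\<phi>. coh_rank_le \<phi> k \<and> 1 - \<delta> < fidelity \<phi> \<psi>"
      using eventually_happens'[OF \<open>F \<noteq> bot\<close>] by blast
  qed
qed (simp add: approx_coh_rank_le_def)

lemma summable_square_div_sqrt_fact: "summable (\<lambda>n. (K * R^n / sqrt (fact n))^2)"
proof -
  have "(K * R^n / sqrt (fact n))^2 = K^2 * ((R^2)^n /\<^sub>R fact n)" for n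
    by (simp add: power_divide power_mult_distrib field_simps flip: power_mult)
  then show ?thesis
    using summable_mult[OF summable_exp_generic[of "R^2"], of "K^2"] by simp
qed

theorem op_approx_coh_rank_le_poly_adag: "op_approx_coh_rank_le (poly_adag b N) (N + 1)"
  unfolding op_approx_coh_rank_le_def
proof
  fix \<alpha> :: complex
  define G where "G h n = coh \<alpha> 0 * fwd_diff_quot_pow b N \<alpha> (of_real h) n / of_real (sqrt (fact n))"
    for h :: real and n
  define K where "K = cmod (coh \<alpha> 0) * (\<Sum>l\<le>N. cmod (b l)) * 2^N"
  define R where "R = cmod \<alpha> + real N"
  show "approx_coh_rank_le (poly_adag b N (coh \<alpha>)) (N + 1)"
  proof (rule approx_coh_rank_le_if_tendsto[where F = "at_right 0" and G = G])
    have "coh_rank_le (G h) (N + 1)" if "h > 0" for h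
    proof -
      define w where "w j = (\<Sum>l\<le>N. b l * (-1)^(l-j) * of_nat (l choose j) / of_real h ^ l)" for j
      have "G h = (\<lambda>n. (\<Sum>j<N + 1. coh \<alpha> 0 * w j * (\<alpha> + of_nat j * of_real h) ^ n)
          / of_real (sqrt (fact n)))"
      proof
        fix n
        have "fwd_diff_quot_pow b N \<alpha> (of_real h) n = (\<Sum>j\<le>N. w j * (\<alpha> + of_nat j * of_real h) ^ n)"
          using that by (simp add: fwd_diff_quot_pow_eq_sum_powers w_def)
        then show "G h n = (\<Sum>j<N + 1. coh \<alpha> 0 * w j * (\<alpha> + of_nat j * of_real h) ^ n)
            / of_real (sqrt (fact n))"
          by (simp add: G_def lessThan_Suc_atMost sum_distrib_left mult.assoc)
      qed
      then show ?thesis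
        by (simp only: coh_rank_le_sum_powers)
    qed
    then show "eventually (\<lambda>h. coh_rank_le (G h) (N + 1)) (at_right 0)"
      by (auto simp: eventually_at_right_field intro: exI[of _ 1])
    show "((\<lambda>h. G h n) \<longlongrightarrow> poly_adag b N (coh \<alpha>) n) (at_right 0)" for n
      unfolding G_def poly_adag_coh
      using isCont_tendsto_compose[OF isCont_fwd_diff_quot_pow[where h\<^sub>0 = 0]
          tendsto_of_real[OF tendsto_ident_at[of 0 "{0<..}"], unfolded of_real_0]]
      by (auto intro!: tendsto_intros)
    have "cmod (G h n) \<le> K * R^n / sqrt (fact n)" if "h < 1" "h > 0" for h n
    proof -
      have "cmod (G h n) = cmod (coh \<alpha> 0) * cmod (fwd_diff_quot_pow b N \<alpha> (of_real h) n) / sqrt (fact n)"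
        by (simp add: G_def norm_mult norm_divide)
      also have "\<dots> \<le> cmod (coh \<alpha> 0) * ((\<Sum>l\<le>N. cmod (b l)) * 2^N * R^n) / sqrt (fact n)"
        unfolding R_def using that
        by (intro divide_right_mono mult_left_mono norm_fwd_diff_quot_pow_le) auto
      finally show ?thesis
        by (simp add: K_def mult.assoc)
    qed
    then show "eventually (\<lambda>h. \<forall>n. cmod (G h n) \<le> K * R^n / sqrt (fact n)) (at_right 0)"
      by (auto simp: eventually_at_right_field intro: exI[of _ 1])
    show "summable (\<lambda>n. (K * R^n / sqrt (fact n))^2)"
      by (rule summable_square_div_sqrt_fact)
  qed simp
qed

lemma adag_eq_poly_adag: "adag = poly_adag (\<lambda>l. if l = 1 then 1 else 0) 1"
  by (intro ext) (simp add: poly_adag_def)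

lemma op_approx_coh_rank_le_adag: "op_approx_coh_rank_le adag 2"
  using op_approx_coh_rank_le_poly_adag[of "\<lambda>l. if l = 1 then 1 else 0" 1]
  unfolding adag_eq_poly_adag[symmetric] by (simp add: numeral_2_eq_2)

section \<open>The one-photon state\<close>

lemma coh_rank_le_mono:
  assumes "coh_rank_le \<phi> k" "k \<le> m"
  shows "coh_rank_le \<phi> m"
proof -
  obtain c \<alpha> where \<phi>: "\<phi> = (\<lambda>n. \<Sum>j<k. c j * coh (\<alpha> j) n)"
    using assms(1) unfolding coh_rank_le_def by blast
  have "\<phi> = (\<lambda>n. \<Sum>j<m. (if j < k then c j else 0) * coh (\<alpha> j) n)"
    unfolding \<phi> using assms(2)
    by (intro ext sum.mono_neutral_cong_left) auto
  then show ?thesis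
    unfolding coh_rank_le_def by (intro exI)
qed

lemma approx_coh_rank_le_mono:
  assumes "approx_coh_rank_le \<psi> k" "k \<le> m"
  shows "approx_coh_rank_le \<psi> m"
  using assms coh_rank_le_mono unfolding approx_coh_rank_le_def by blast

lemma norm_coh_sq: "(cmod (coh \<beta> n))^2 = exp (- ((cmod \<beta>)^2)) * ((cmod \<beta>)^2)^n / fact n"
proof -
  have "(exp (- ((cmod \<beta>)^2) / 2))^2 = exp (- ((cmod \<beta>)^2))"
    by (simp flip: exp_of_nat_mult)
  then show ?thesis
    by (simp add: coh_def norm_mult norm_divide norm_power power_mult_distrib power_divide
        flip: power_mult) (simp add: mult.commute)
qed

lemma norm_coh_sq_sums: "(\<lambda>n. (cmod (coh \<beta> n))^2) sums 1"
proof -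
  let ?x = "(cmod \<beta>)^2"
  have "(\<lambda>n. exp (- ?x) * (?x^n /\<^sub>R fact n)) sums (exp (- ?x) * exp ?x)"
    by (intro sums_mult exp_converges)
  moreover have "exp (- ?x) * exp ?x = 1"
    by (simp add: exp_minus)
  ultimately show ?thesis
    by (simp add: norm_coh_sq divide_inverse mult_ac)
qed

lemma normsq_st_coh: "normsq_st (coh \<beta>) = 1"
  unfolding normsq_st_def using norm_coh_sq_sums by (rule sums_unique[symmetric])

lemma norm_coh_1_sq_le: "(cmod (coh \<beta> 1))^2 \<le> 1/2"
proof -
  let ?x = "(cmod \<beta>)^2"
  have "?x \<le> exp (?x - 1)"
    using exp_ge_add_one_self[of "?x - 1"] by simp
  also have "\<dots> = exp ?x / exp 1"
    by (rule exp_diff)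
  also have "\<dots> \<le> exp ?x / 2"
    using exp_ge_add_one_self[of 1] by (intro divide_left_mono) auto
  finally show ?thesis
    by (simp add: norm_coh_sq exp_minus field_simps)
qed

lemma fidelity_coh_one_photon_le:
  "fidelity (\<lambda>n. c * coh \<beta> n) (\<lambda>n. if n = 1 then 1 else 0) \<le> 1/2"
proof -
  have single: "(\<Sum>n. f n) = f 1" if "\<And>n. n \<noteq> 1 \<Longrightarrow> f n = 0" for f :: "nat \<Rightarrow> 'a::real_normed_vector"
    using suminf_finite[of "{1}" f] that by auto
  have "normsq_st (\<lambda>n. c * coh \<beta> n) = (cmod c)^2 * normsq_st (coh \<beta>)"
    unfolding normsq_st_def norm_mult power_mult_distrib
    by (rule suminf_mult[OF sums_summable[OF norm_coh_sq_sums]])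
  moreover have "normsq_st (\<lambda>n. if n = 1 then 1 else 0) = 1"
    unfolding normsq_st_def by (subst single) auto
  moreover have "inner_st (\<lambda>n. c * coh \<beta> n) (\<lambda>n. if n = 1 then 1 else 0) = cnj (c * coh \<beta> 1)"
    unfolding inner_st_def by (subst single) auto
  ultimately have "fidelity (\<lambda>n. c * coh \<beta> n) (\<lambda>n. if n = 1 then 1 else 0)
      = (cmod c)^2 * (cmod (coh \<beta> 1))^2 / (cmod c)^2"
    by (simp add: fidelity_def normsq_st_coh norm_mult power_mult_distrib)
  also have "\<dots> \<le> 1/2"
    using norm_coh_1_sq_le[of \<beta>] by (cases "c = 0") auto
  finally show ?thesis .
qed

lemma not_approx_coh_rank_le_one_photon: "\<not> approx_coh_rank_le (\<lambda>n. if n = 1 then 1 else 0) 1"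
proof
  let ?e = "\<lambda>n::nat. if n = 1 then 1 else (0::complex)"
  assume "approx_coh_rank_le ?e 1"
  moreover have "?e \<noteq> (\<lambda>_. 0)"
    by (metis one_neq_zero)
  ultimately obtain \<phi> where "coh_rank_le \<phi> 1" and fid: "1 - 1/2 < fidelity \<phi> ?e"
    unfolding approx_coh_rank_le_def by (meson half_gt_zero zero_less_one)
  then obtain c \<beta> where "\<phi> = (\<lambda>n. c * coh \<beta> n)"
    unfolding coh_rank_le_def by auto
  then show False
    using fid fidelity_coh_one_photon_le[of c \<beta>] by simp
qed

lemma adag_coh_vacuum: "adag (coh 0) = (\<lambda>n. if n = 1 then 1 else 0)"
  by (intro ext) (simp add: adag_def coh_def split: nat.split)

lemma approx_coh_rank_one_photon: "approx_coh_rank (\<lambda>n. if n = 1 then 1 else 0) = 2"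
  unfolding approx_coh_rank_def
proof (rule Least_equality)
  show "approx_coh_rank_le (\<lambda>n. if n = 1 then 1 else 0) 2"
    using op_approx_coh_rank_le_adag unfolding op_approx_coh_rank_le_def adag_coh_vacuum[symmetric]
    by blast
  show "2 \<le> k" if "approx_coh_rank_le (\<lambda>n. if n = 1 then 1 else 0) k" for k
    using approx_coh_rank_le_mono[OF that, of 1] not_approx_coh_rank_le_one_photon by linarith
qed

theorem corollary2:
  shows "op_approx_coh_rank_eq adag 2 \<and>
         (\<forall>(N::nat) (b::nat \<Rightarrow> complex). op_approx_coh_rank_le (poly_adag b N) (N + 1))"
proof -
  have "approx_coh_rank (adag (coh 0)) = 2"
    unfolding adag_coh_vacuum by (rule approx_coh_rank_one_photon)
  then show ?thesis
    unfolding op_approx_coh_rank_eq_def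
    using op_approx_coh_rank_le_adag op_approx_coh_rank_le_poly_adag by blast
qed

end
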